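(* Let $f_1,\dots,f_n:\mathbb{R}^d\to\mathbb{R}$ be such that each $f_i$ is $L_i$-smooth and $\mu_i$-strongly convex with minimizer $x_i$. Let $\alpha\in(0,1)$ and $\tilde f(x) = \frac{1}{n}\sum_{i=1}^n f_i(\alpha x + (1-\alpha)x_i)$, with minimizer $x^*$. Let $\overline{\mu} = \frac{1}{n}\sum_i\mu_i$. Then for any $x^0\in\mathbb{R}^d$, \[ \|x^0 - x^*\|^2 \leq \frac{1}{\overline{\mu}}\cdot\frac{1}{n}\sum_{i=1}^n L_i\|x^0 - x_i\|^2. \]
   Context: A differentiable $g$ is $L$-smooth if $\|\nabla g(x)-\nabla g(y)\|\leq L\|x-y\|$ for all $x,y$, and $\mu$-strongly convex if $g(x)\geq g(y)+\langle\nabla g(y),x-y\rangle+\frac{\mu}{2}\|x-y\|^2$ for all $x,y$. *)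

theory Defs
  imports "HOL-Analysis.Analysis"
begin

definition L_smooth :: "real \<Rightarrow> ('a::real_inner \<Rightarrow> real) \<Rightarrow> bool" where
  "L_smooth L g \<longleftrightarrow> (\<exists>G. (\<forall>x. GDERIV g x :> G x) \<and>
      (\<forall>x y. norm (G x - G y) \<le> L * norm (x - y)))"

definition strongly_convex :: "real \<Rightarrow> ('a::real_inner \<Rightarrow> real) \<Rightarrow> bool" where
  "strongly_convex \<mu> g \<longleftrightarrow> (\<exists>G. (\<forall>x. GDERIV g x :> G x) \<and>
      (\<forall>x y. g x \<ge> g y + inner (G y) (x - y) + \<mu> / 2 * (norm (x - y))\<^sup>2))"

end

theory Submission
  imports Defs
begin

(* The averaged function H y = \<Sum>\<^sub>i f\<^sub>i (\<alpha> y + (1 - \<alpha>) x\<^sub>i) is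
   \<alpha>\<^sup>2 (\<Sum>\<^sub>i \<mu>\<^sub>i)-strongly convex, so it grows quadratically away from its minimiser x*:
   H x0 - H x* \<ge> \<alpha>\<^sup>2 (\<Sum>\<^sub>i \<mu>\<^sub>i) |x0 - x*|\<^sup>2 / 2.
   Conversely, L\<^sub>i-smoothness at the minimiser x\<^sub>i bounds the i-th summand at x0 by
   f\<^sub>i x\<^sub>i + \<alpha>\<^sup>2 L\<^sub>i |x0 - x\<^sub>i|\<^sup>2 / 2, and f\<^sub>i x\<^sub>i is at most the i-th summand at x*,
   so H x0 - H x* \<le> \<alpha>\<^sup>2 (\<Sum>\<^sub>i L\<^sub>i |x0 - x\<^sub>i|\<^sup>2) / 2. Comparing the two bounds gives the claim. *)

lemma gderiv_zero_at_minimum: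
  fixes g :: "'a::real_inner \<Rightarrow> real"
  assumes "GDERIV g m :> G" and "\<And>y. g m \<le> g y"
  shows "G = 0"
proof -
  have "(\<lambda>h. inner h G) = (\<lambda>h. 0)"
    using assms by (intro differential_zero_maxmin[OF _ open_UNIV]) (auto simp: gderiv_def)
  then have "inner G G = 0" by metis
  then show ?thesis by simp
qed

lemma GDERIV_affine_comp:
  fixes g :: "'a::real_inner \<Rightarrow> real"
  assumes "GDERIV g (a *\<^sub>R x + c) :> G"
  shows "GDERIV (\<lambda>y. g (a *\<^sub>R y + c)) x :> a *\<^sub>R G"
proof -
  have "((\<lambda>y. a *\<^sub>R y + c) has_derivative (\<lambda>h. a *\<^sub>R h)) (at x)"
    by (auto intro!: derivative_eq_intros)
  from has_derivative_compose[OF this assms[unfolded gderiv_def]]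
  show ?thesis by (simp add: gderiv_def)
qed

lemma strongly_convex_affine_comp:
  fixes g :: "'a::real_inner \<Rightarrow> real"
  assumes "strongly_convex \<mu> g"
  shows "strongly_convex (a\<^sup>2 * \<mu>) (\<lambda>y. g (a *\<^sub>R y + c))"
proof -
  obtain G where G: "\<And>x. GDERIV g x :> G x"
    and ineq: "\<And>x y. g x \<ge> g y + inner (G y) (x - y) + \<mu> / 2 * (norm (x - y))\<^sup>2"
    using assms unfolding strongly_convex_def by blast
  have "g (a *\<^sub>R x + c) \<ge> g (a *\<^sub>R y + c) + inner (a *\<^sub>R G (a *\<^sub>R y + c)) (x - y)
          + a\<^sup>2 * \<mu> / 2 * (norm (x - y))\<^sup>2" for x y
    using ineq[where x = "a *\<^sub>R x + c" and y = "a *\<^sub>R y + c"]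
    by (simp add: scaleR_diff_right[symmetric] power_mult_distrib mult_ac)
  with GDERIV_affine_comp[OF G] show ?thesis
    unfolding strongly_convex_def by (auto intro!: exI[of _ "\<lambda>y. a *\<^sub>R G (a *\<^sub>R y + c)"])
qed

lemma strongly_convex_add:
  fixes f g :: "'a::real_inner \<Rightarrow> real"
  assumes "strongly_convex \<mu> f" and "strongly_convex \<nu> g"
  shows "strongly_convex (\<mu> + \<nu>) (\<lambda>x. f x + g x)"
proof -
  obtain F where F: "\<And>x. GDERIV f x :> F x"
    and f: "\<And>x y. f x \<ge> f y + inner (F y) (x - y) + \<mu> / 2 * (norm (x - y))\<^sup>2"
    using assms(1) unfolding strongly_convex_def by blast
  obtain G where G: "\<And>x. GDERIV g x :> G x"
    and g: "\<And>x y. g x \<ge> g y + inner (G y) (x - y) + \<nu> / 2 * (norm (x - y))\<^sup>2"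
    using assms(2) unfolding strongly_convex_def by blast
  have "f x + g x \<ge> f y + g y + inner (F y + G y) (x - y) + (\<mu> + \<nu>) / 2 * (norm (x - y))\<^sup>2"
    for x y
    using f[where x = x and y = y] g[where x = x and y = y]
    by (simp add: inner_add_left add_divide_distrib distrib_right)
  with GDERIV_add[OF F G] show ?thesis
    unfolding strongly_convex_def by (auto intro!: exI[of _ "\<lambda>x. F x + G x"])
qed

lemma strongly_convex_sum:
  fixes f :: "'i \<Rightarrow> 'a::real_inner \<Rightarrow> real"
  assumes "finite I" and "\<And>i. i \<in> I \<Longrightarrow> strongly_convex (\<mu> i) (f i)"
  shows "strongly_convex (\<Sum>i\<in>I. \<mu> i) (\<lambda>x. \<Sum>i\<in>I. f i x)"
  using assms
proof (induction I rule: finite_induct)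
  case empty
  show ?case unfolding strongly_convex_def using GDERIV_const by force
next
  case (insert j I)
  then show ?case by (simp add: strongly_convex_add)
qed

lemma strongly_convex_quadratic_growth:
  fixes g :: "'a::real_inner \<Rightarrow> real"
  assumes "strongly_convex \<mu> g" and "\<And>y. g m \<le> g y"
  shows "g m + \<mu> / 2 * (norm (x - m))\<^sup>2 \<le> g x"
proof -
  obtain G where G: "\<And>x. GDERIV g x :> G x"
    and ineq: "\<And>x y. g x \<ge> g y + inner (G y) (x - y) + \<mu> / 2 * (norm (x - y))\<^sup>2"
    using assms(1) unfolding strongly_convex_def by blast
  have "G m = 0" using gderiv_zero_at_minimum[OF G assms(2)] .
  with ineq[where x = x and y = m] show ?thesis by simp
qed

lemma lipschitz_gradient_descent_bound:
  fixes g :: "'a::real_inner \<Rightarrow> real"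
  assumes G: "\<And>x. GDERIV g x :> G x"
    and lip: "\<And>x y. norm (G x - G y) \<le> L * norm (x - y)"
  shows "g (x + h) \<le> g x + inner (G x) h + L / 2 * (norm h)\<^sup>2"
proof -
  define \<phi> where "\<phi> t = g (x + t *\<^sub>R h) - t * inner (G x) h - L / 2 * t\<^sup>2 * (norm h)\<^sup>2" for t
  define \<phi>' where "\<phi>' t = inner (G (x + t *\<^sub>R h) - G x) h - L * t * (norm h)\<^sup>2" for t
  have der: "(\<phi> has_real_derivative \<phi>' t) (at t)" for t
  proof -
    have "((\<lambda>t. x + t *\<^sub>R h) has_derivative (\<lambda>s. s *\<^sub>R h)) (at t)"
      by (auto intro!: derivative_eq_intros)
    from has_derivative_compose[OF this G[of "x + t *\<^sub>R h", unfolded gderiv_def]]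
    have "((\<lambda>t. g (x + t *\<^sub>R h)) has_real_derivative inner (G (x + t *\<^sub>R h)) h) (at t)"
      by (rule has_derivative_imp_has_field_derivative) (simp add: inner_commute)
    then show ?thesis
      unfolding \<phi>_def[abs_def] \<phi>'_def
      by (auto intro!: derivative_eq_intros simp: inner_diff_left)
  qed
  have "\<phi>' t \<le> 0" if "0 < t" for t
  proof -
    have "inner (G (x + t *\<^sub>R h) - G x) h \<le> norm (G (x + t *\<^sub>R h) - G x) * norm h"
      by (rule norm_cauchy_schwarz)
    also have "\<dots> \<le> L * norm (t *\<^sub>R h) * norm h"
      using lip[of "x + t *\<^sub>R h" x] by (intro mult_right_mono) auto
    also have "\<dots> = L * t * (norm h)\<^sup>2" using that by (simp add: power2_eq_square)
    finally show ?thesis unfolding \<phi>'_def by simp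
  qed
  then have "\<phi> 1 \<le> \<phi> 0"
    using der by (intro DERIV_nonpos_imp_decreasing_open[of 0 1 \<phi>])
      (auto intro: DERIV_isCont continuous_at_imp_continuous_on)
  then show ?thesis unfolding \<phi>_def by simp
qed

lemma L_smooth_quadratic_bound_at_minimum:
  fixes g :: "'a::real_inner \<Rightarrow> real"
  assumes "L_smooth L g" and "\<And>y. g m \<le> g y"
  shows "g x \<le> g m + L / 2 * (norm (x - m))\<^sup>2"
proof -
  obtain G where G: "\<And>x. GDERIV g x :> G x"
    and lip: "\<And>x y. norm (G x - G y) \<le> L * norm (x - y)"
    using assms(1) unfolding L_smooth_def by blast
  have "G m = 0" using gderiv_zero_at_minimum[OF G assms(2)] .
  with lipschitz_gradient_descent_bound[OF G lip, of m "x - m"] show ?thesis by simp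
qed

lemma L_smooth_bound_toward_minimum:
  fixes g :: "'a::real_inner \<Rightarrow> real"
  assumes "L_smooth L g" and "\<And>y. g m \<le> g y"
  shows "g (a *\<^sub>R x + (1 - a) *\<^sub>R m) \<le> g m + a\<^sup>2 / 2 * (L * (norm (x - m))\<^sup>2)"
proof -
  have "a *\<^sub>R x + (1 - a) *\<^sub>R m - m = a *\<^sub>R (x - m)"
    by (simp add: algebra_simps)
  with L_smooth_quadratic_bound_at_minimum[OF assms, of "a *\<^sub>R x + (1 - a) *\<^sub>R m"]
  show ?thesis by (simp add: power_mult_distrib mult_ac)
qed

theorem proposition5:
  fixes f :: "nat \<Rightarrow> 'a::euclidean_space \<Rightarrow> real"
    and L \<mu> :: "nat \<Rightarrow> real" and xm :: "nat \<Rightarrow> 'a"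
    and n :: nat and \<alpha> :: real and xstar x0 :: 'a
  assumes "n \<ge> 1"
    and "\<And>i. i \<in> {1..n} \<Longrightarrow> L_smooth (L i) (f i)"
    and "\<And>i. i \<in> {1..n} \<Longrightarrow> \<mu> i > 0"
    and "\<And>i. i \<in> {1..n} \<Longrightarrow> strongly_convex (\<mu> i) (f i)"
    and "\<And>i y. i \<in> {1..n} \<Longrightarrow> f i (xm i) \<le> f i y"
    and "0 < \<alpha>" and "\<alpha> < 1"
    and "\<And>y. (1 / real n) * (\<Sum>i=1..n. f i (\<alpha> *\<^sub>R xstar + (1 - \<alpha>) *\<^sub>R xm i))
              \<le> (1 / real n) * (\<Sum>i=1..n. f i (\<alpha> *\<^sub>R y + (1 - \<alpha>) *\<^sub>R xm i))"
  shows "(norm (x0 - xstar))\<^sup>2 \<le>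
    (1 / ((1 / real n) * (\<Sum>i=1..n. \<mu> i))) *
    ((1 / real n) * (\<Sum>i=1..n. L i * (norm (x0 - xm i))\<^sup>2))"
proof -
  define H where "H y = (\<Sum>i=1..n. f i (\<alpha> *\<^sub>R y + (1 - \<alpha>) *\<^sub>R xm i))" for y
  define M where "M = (\<Sum>i=1..n. \<mu> i)"
  define S where "S = (\<Sum>i=1..n. L i * (norm (x0 - xm i))\<^sup>2)"
  have n_pos: "real n > 0" using assms(1) by simp
  have M_pos: "M > 0" unfolding M_def using assms(1,3) by (intro sum_pos) auto
  have H_min: "H xstar \<le> H y" for y
    using assms(8)[of y] n_pos unfolding H_def by (simp add: divide_le_cancel)
  have "strongly_convex (\<Sum>i=1..n. \<alpha>\<^sup>2 * \<mu> i) H"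
    unfolding H_def by (intro strongly_convex_sum strongly_convex_affine_comp assms(4)) auto
  then have "strongly_convex (\<alpha>\<^sup>2 * M) H" by (simp add: M_def sum_distrib_left)
  from strongly_convex_quadratic_growth[OF this H_min, of x0]
  have lower: "H xstar + \<alpha>\<^sup>2 / 2 * (M * (norm (x0 - xstar))\<^sup>2) \<le> H x0"
    by (simp add: mult_ac)
  have "f i (\<alpha> *\<^sub>R x0 + (1 - \<alpha>) *\<^sub>R xm i)
          \<le> f i (\<alpha> *\<^sub>R xstar + (1 - \<alpha>) *\<^sub>R xm i) + \<alpha>\<^sup>2 / 2 * (L i * (norm (x0 - xm i))\<^sup>2)"
    if i: "i \<in> {1..n}" for i
    using L_smooth_bound_toward_minimum[OF assms(2,5)[OF i]] assms(5)[OF i]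
    by (meson add_right_mono order_trans)
  then have "H x0 \<le> (\<Sum>i=1..n. f i (\<alpha> *\<^sub>R xstar + (1 - \<alpha>) *\<^sub>R xm i)
                        + \<alpha>\<^sup>2 / 2 * (L i * (norm (x0 - xm i))\<^sup>2))"
    unfolding H_def by (rule sum_mono)
  also have "\<dots> = H xstar + \<alpha>\<^sup>2 / 2 * S"
    unfolding H_def S_def by (simp add: sum.distrib sum_distrib_left)
  finally have upper: "H x0 \<le> H xstar + \<alpha>\<^sup>2 / 2 * S" .
  from lower upper have "\<alpha>\<^sup>2 / 2 * (M * (norm (x0 - xstar))\<^sup>2) \<le> \<alpha>\<^sup>2 / 2 * S"
    by linarith
  then have "M * (norm (x0 - xstar))\<^sup>2 \<le> S"
    using \<open>0 < \<alpha>\<close> by (simp add: mult_le_cancel_left_pos)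
  then show ?thesis
    using M_pos n_pos unfolding M_def[symmetric] S_def[symmetric] by (simp add: field_simps)
qed

end
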